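(* Fix integers $n\ge m\ge 3$ and $d$ with $n+1\le\binom{d+m-2}{m-1}$, and let $s=\lfloor d/2\rfloor$. Let $h_{max}$ be the maximal $h$-vector of Perazzo algebras with these invariants. Then $h_{max}$ is unimodal if and only if both (1) $\gamma_{s-1}<\beta_{s-1}$, and (2) $\alpha_{s-1}+\gamma_{s-1}\le\alpha_s+\beta_s$.
   Context: $K$ algebraically closed of characteristic zero. A Perazzo form of degree $d$ is $F=X_0p_0+\dots+X_np_n+G\in K[X_0,\dots,X_n,U_1,\dots,U_m]_d$ with $p_i\in K[U_1,\dots,U_m]_{d-1}$ algebraically dependent but linearly independent, $G\in K[U_1,\dots,U_m]_d$; $A_F=R/\operatorname{Ann}_RF$ with $R$ the ring of differential operators. $\alpha_i=\binom{m+i-1}{m-1}$, $\beta_i=\binom{d+m-i-1}{m-1}$, $\gamma_i=(n+1)\binom{m+i-2}{m-1}$. The maximal $h$-vector $h_{max}=(h_0,\dots,h_d)$ is symmetric ($h_i=h_{d-i}$) with $h_i=\min\{\alpha_i+\beta_i,\alpha_i+\gamma_i\}$ for $0\le i\le s$. A vector $(h_0,\dots,h_d)$ is unimodal if $h_0\le\dots\le h_k\ge h_{k+1}\ge\dots\ge h_d$ for some $k$. *)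

theory Defs
  imports Main
begin

definition alpha :: "nat \<Rightarrow> nat \<Rightarrow> nat" where
  "alpha m i = (m + i - 1) choose (m - 1)"

definition beta :: "nat \<Rightarrow> nat \<Rightarrow> nat \<Rightarrow> nat" where
  "beta m d i = (d + m - i - 1) choose (m - 1)"

definition gamma :: "nat \<Rightarrow> nat \<Rightarrow> nat \<Rightarrow> nat" where
  "gamma n m i = (n + 1) * ((m + i - 2) choose (m - 1))"

definition hmax :: "nat \<Rightarrow> nat \<Rightarrow> nat \<Rightarrow> nat \<Rightarrow> nat" where
  "hmax n m d i =
     (let f = (\<lambda>j. min (alpha m j + beta m d j) (alpha m j + gamma n m j)) in
      if i \<le> d div 2 then f i else if i \<le> d then f (d - i) else 0)"

definition unimodal :: "(nat \<Rightarrow> nat) \<Rightarrow> nat \<Rightarrow> bool" where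
  "unimodal h d \<longleftrightarrow> (\<exists>k\<le>d. (\<forall>i<k. h i \<le> h (Suc i)) \<and>
                               (\<forall>i. k \<le> i \<and> i < d \<longrightarrow> h (Suc i) \<le> h i))"

end

theory Submission
  imports Defs
begin

text \<open>The first half of \<open>h\<^sub>m\<^sub>a\<^sub>x\<close> is the minimum of \<open>\<alpha> + \<gamma>\<close>, which is
  non-decreasing, and of \<open>\<alpha> + \<beta>\<close>, which strictly decreases up to the middle degree \<open>s\<close>.
  Since \<open>\<gamma>\<close> increases and \<open>\<beta>\<close> decreases, the degrees where \<open>\<gamma> < \<beta>\<close> form an initial
  segment, on which the minimum is the increasing branch \<open>\<alpha> + \<gamma>\<close>; once \<open>\<beta> \<le> \<gamma>\<close> the
  minimum follows the strictly decreasing branch. So the first half rises iff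
  \<open>\<gamma> < \<beta>\<close> holds up to degree \<open>s - 1\<close> (condition (1)) and the last step into degree \<open>s\<close>,
  where the minimum may switch branches, does not drop (condition (2)). By symmetry,
  unimodality is equivalent to the first half rising. Only \<open>m \<ge> 3\<close> is needed: the
  hypotheses on \<open>n\<close> merely make \<open>h\<^sub>m\<^sub>a\<^sub>x\<close> the h-vector of an actual Perazzo algebra.\<close>

lemma binomial_right_strict_mono:
  assumes "a < b" "0 < r" "r \<le> b"
  shows "a choose r < b choose r"
proof -
  obtain b' r' where b: "b = Suc b'" and r: "r = Suc r'"
    using assms by (cases b; cases r) auto
  have "a choose r \<le> b' choose r"
    using assms b by (intro binomial_right_mono) simp
  moreover have "0 < b' choose r'"
    using assms b r by simp
  moreover have "b choose r = (b' choose r') + (b' choose r)"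
    using b r by simp
  ultimately show ?thesis
    by linarith
qed

lemma mono_alpha: "mono (alpha m)"
  unfolding mono_iff_le_Suc alpha_def by (intro allI binomial_right_mono) simp

lemma mono_gamma: "mono (gamma n m)"
  unfolding mono_def gamma_def by (intro allI impI mult_le_mono2 binomial_right_mono) simp

lemma antimono_beta: "antimono (beta m d)"
  unfolding antimono_def beta_def by (intro allI impI binomial_right_mono) simp

lemma gamma_0: "2 \<le> m \<Longrightarrow> gamma n m 0 = 0"
  unfolding gamma_def by (simp add: binomial_eq_0)

lemma beta_0_pos: "1 \<le> m \<Longrightarrow> 0 < beta m d 0"
  unfolding beta_def by simp

text \<open>Pascal's rule splits both differences into binomials with lower index \<open>m - 2\<close>,
  and the one lost by \<open>\<beta>\<close> has the larger upper index.\<close>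

lemma alpha_plus_beta_strict_decreasing:
  assumes "3 \<le> m" "j < d div 2"
  shows "alpha m (Suc j) + beta m d (Suc j) < alpha m j + beta m d j"
proof -
  have m: "m - 1 = Suc (m - 2)" "m + Suc j - 1 = Suc (m + j - 1)"
    using assms by arith+
  have d: "d + m - j - 1 = Suc (d + m - j - 2)" "d + m - Suc j - 1 = d + m - j - 2"
    using assms by arith+
  have alpha_step: "alpha m (Suc j) = alpha m j + ((m + j - 1) choose (m - 2))"
    unfolding alpha_def m by (simp only: binomial_Suc_Suc)
  have beta_step: "beta m d j = beta m d (Suc j) + ((d + m - j - 2) choose (m - 2))"
    unfolding beta_def m(1) d by (simp only: binomial_Suc_Suc add.commute)
  have "(m + j - 1) choose (m - 2) < (d + m - j - 2) choose (m - 2)"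
    using assms by (intro binomial_right_strict_mono) auto
  then show ?thesis
    using alpha_step beta_step by simp
qed

definition symmetric_extension :: "(nat \<Rightarrow> nat) \<Rightarrow> nat \<Rightarrow> nat \<Rightarrow> nat" where
  "symmetric_extension f d i =
     (if i \<le> d div 2 then f i else if i \<le> d then f (d - i) else 0)"

lemma hmax_eq_symmetric_extension:
  "hmax n m d =
     symmetric_extension (\<lambda>j. min (alpha m j + beta m d j) (alpha m j + gamma n m j)) d"
  unfolding hmax_def symmetric_extension_def Let_def by (rule ext) simp

lemma symmetric_extension_reflect:
  "i \<le> d \<Longrightarrow> symmetric_extension f d (d - i) = symmetric_extension f d i"
  unfolding symmetric_extension_def by (auto intro: arg_cong[of _ _ f])

lemma unimodal_symmetric_extension_iff:
  "unimodal (symmetric_extension f d) d \<longleftrightarrow> (\<forall>i < d div 2. f i \<le> f (Suc i))"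
  (is "unimodal ?h d \<longleftrightarrow> ?rising")
proof
  assume "unimodal ?h d"
  then obtain k where k: "k \<le> d" "\<forall>i<k. ?h i \<le> ?h (Suc i)"
    "\<forall>i. k \<le> i \<and> i < d \<longrightarrow> ?h (Suc i) \<le> ?h i"
    unfolding unimodal_def by blast
  have "?h i \<le> ?h (Suc i)" if "i < d div 2" for i
  proof (cases "i < k")
    case True
    then show ?thesis using k(2) by blast
  next
    case False
    then have "?h (Suc (d - Suc i)) \<le> ?h (d - Suc i)"
      using k(3) that by auto
    moreover have "Suc (d - Suc i) = d - i"
      using that by auto
    ultimately show ?thesis
      using that symmetric_extension_reflect[of i d f] symmetric_extension_reflect[of "Suc i" d f]
      by simp
  qed
  then show ?rising
    unfolding symmetric_extension_def by fastforce
next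
  assume rising: ?rising
  then have left: "?h i \<le> ?h (Suc i)" if "i < d div 2" for i
    using that unfolding symmetric_extension_def by auto
  have "?h (Suc i) \<le> ?h i" if "d div 2 \<le> i" "i < d" for i
  proof (cases "d - Suc i < d div 2")
    case True
    then have "?h (d - Suc i) \<le> ?h (d - i)"
      using left[of "d - Suc i"] that by (simp add: Suc_diff_Suc)
    then show ?thesis
      using that symmetric_extension_reflect[of i d f] symmetric_extension_reflect[of "Suc i" d f]
      by simp
  next
    case False
    then have "d - Suc i = i"
      using that by arith
    then show ?thesis
      using that symmetric_extension_reflect[of "Suc i" d f] by simp
  qed
  then show "unimodal ?h d"
    unfolding unimodal_def using left by (intro exI[of _ "d div 2"]) auto
qed

lemma min_rising_falling_mono_iff:
  fixes a b g :: "nat \<Rightarrow> nat"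
  defines "h \<equiv> \<lambda>i. min (a i + b i) (a i + g i)"
  assumes "mono a" "mono g" "antimono b" "g 0 < b 0"
    and falling: "\<And>j. j < s \<Longrightarrow> a (Suc j) + b (Suc j) < a j + b j"
  shows "(\<forall>i < s. h i \<le> h (Suc i)) \<longleftrightarrow>
           g (s - 1) < b (s - 1) \<and> a (s - 1) + g (s - 1) \<le> a s + b s"
proof
  assume rising: "\<forall>i < s. h i \<le> h (Suc i)"
  show "g (s - 1) < b (s - 1) \<and> a (s - 1) + g (s - 1) \<le> a s + b s"
  proof (cases s)
    case 0
    then show ?thesis using \<open>g 0 < b 0\<close> by simp
  next
    case (Suc t)
    have "g t < b t"
    proof (rule ccontr)
      assume "\<not> g t < b t"
      moreover have "g t \<le> g (Suc t)" "b (Suc t) \<le> b t"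
        using \<open>mono g\<close> \<open>antimono b\<close> by (simp_all add: monoD antimonoD)
      ultimately have "h t = a t + b t" "h (Suc t) = a (Suc t) + b (Suc t)"
        unfolding h_def by auto
      then show False
        using rising falling[of t] Suc by fastforce
    qed
    moreover have "h t \<le> h (Suc t)"
      using rising Suc by simp
    ultimately show ?thesis
      unfolding h_def using Suc by simp
  qed
next
  assume cond: "g (s - 1) < b (s - 1) \<and> a (s - 1) + g (s - 1) \<le> a s + b s"
  have below: "h i = a i + g i" if "i < s" for i
  proof -
    have "g i \<le> g (s - 1)" "b (s - 1) \<le> b i"
      using that \<open>mono g\<close> \<open>antimono b\<close> by (simp_all add: monoD antimonoD)
    with cond show ?thesis
      unfolding h_def by simp
  qed
  have step: "a i + g i \<le> a (Suc i) + g (Suc i)" for i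
    using \<open>mono a\<close> \<open>mono g\<close> by (simp add: add_mono mono_iff_le_Suc)
  have "h i \<le> h (Suc i)" if "i < s" for i
  proof (cases "Suc i < s")
    case True
    then show ?thesis using below that step by simp
  next
    case False
    then have "i = s - 1" "Suc i = s" using that by auto
    then show ?thesis
      using below[OF that] cond step[of i] unfolding h_def by simp
  qed
  then show "\<forall>i < s. h i \<le> h (Suc i)" by blast
qed

theorem theorem3p5:
  fixes n m d :: nat
  assumes "3 \<le> m" and "m \<le> n"
    and "n + 1 \<le> (d + m - 2) choose (m - 1)"
  shows "unimodal (hmax n m d) d \<longleftrightarrow>
           (gamma n m (d div 2 - 1) < beta m d (d div 2 - 1) \<and>
            alpha m (d div 2 - 1) + gamma n m (d div 2 - 1)
              \<le> alpha m (d div 2) + beta m d (d div 2))"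
proof -
  have "gamma n m 0 < beta m d 0"
    using assms(1) gamma_0 beta_0_pos by simp
  then show ?thesis
    unfolding hmax_eq_symmetric_extension unimodal_symmetric_extension_iff
    using min_rising_falling_mono_iff[OF mono_alpha mono_gamma antimono_beta]
      alpha_plus_beta_strict_decreasing[OF assms(1)]
    by blast
qed

end
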